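(* Let $M$ be a finite inverse monoid whose Green's relation $\mathscr{H}$ is trivial, and let $0$ be its zero. Let $\rho$ be a congruence of $M$ such that, for every $e\in E(M)$, if there exists $f\in E(M)$ with $f<e$ and $e\,\rho\, f$, then $e\,\rho\,0$. Then $\rho$ is a Rees congruence of $M$.
   Context: A finite inverse monoid with trivial $\mathscr{H}$-relation has a zero element. $E(M)$ is the set of idempotents of $M$, with natural partial order $e\leqslant f$ iff $ef=e=fe$; $f<e$ means $f\leqslant e$ and $f\neq e$. Green's relation $\mathscr{H}$: $a\mathscr{H}b$ iff $Ma=Mb$ and $aM=bM$. For an ideal $I$ of $M$ (i.e. $MIM\subseteq I$), the Rees congruence $\sim_I$ is defined by $a\sim_I b$ iff $a=b$ or $a,b\in I$. *)

theory Defs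
  imports Main
begin

definition inverse_monoid :: "'a::monoid_mult itself \<Rightarrow> bool" where
  "inverse_monoid _ \<longleftrightarrow> (\<forall>a::'a. \<exists>!b. a * b * a = a \<and> b * a * b = b)"

definition idems :: "'a::monoid_mult set" where
  "idems = {e. e * e = e}"

definition nat_le :: "'a::monoid_mult \<Rightarrow> 'a \<Rightarrow> bool" where
  "nat_le e f \<longleftrightarrow> e * f = e \<and> f * e = e"

definition nat_less :: "'a::monoid_mult \<Rightarrow> 'a \<Rightarrow> bool" where
  "nat_less e f \<longleftrightarrow> nat_le e f \<and> e \<noteq> f"

definition greenH :: "'a::monoid_mult \<Rightarrow> 'a \<Rightarrow> bool" where
  "greenH a b \<longleftrightarrow> (\<lambda>m. m * a) ` UNIV = (\<lambda>m. m * b) ` UNIV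
                 \<and> (\<lambda>m. a * m) ` UNIV = (\<lambda>m. b * m) ` UNIV"

definition is_zero :: "'a::monoid_mult \<Rightarrow> bool" where
  "is_zero z \<longleftrightarrow> (\<forall>x. z * x = z \<and> x * z = z)"

definition congruence :: "('a::monoid_mult \<times> 'a) set \<Rightarrow> bool" where
  "congruence \<rho> \<longleftrightarrow> equiv UNIV \<rho> \<and>
     (\<forall>a b c. (a, b) \<in> \<rho> \<longrightarrow> (c * a, c * b) \<in> \<rho> \<and> (a * c, b * c) \<in> \<rho>)"

definition is_ideal :: "'a::monoid_mult set \<Rightarrow> bool" where
  "is_ideal I \<longleftrightarrow> (\<forall>m x n. x \<in> I \<longrightarrow> m * x * n \<in> I)"

definition rees_cong :: "'a::monoid_mult set \<Rightarrow> ('a \<times> 'a) set" where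
  "rees_cong I = {(a, b). a = b \<or> (a \<in> I \<and> b \<in> I)}"

end

theory Submission
  imports Defs
begin

text \<open>A nontrivial pair \<open>a \<rho> b\<close> yields \<open>a a\<inverse> \<rho> b b\<inverse>\<close> and \<open>a\<inverse> a \<rho> b\<inverse> b\<close>,
  since congruences of inverse monoids respect inversion. As \<open>\<H>\<close> is trivial, one of these
  pairs of idempotents is nontrivial, say \<open>e \<rho> f\<close> with \<open>e \<noteq> f\<close>. Then \<open>ef\<close> lies strictly
  below \<open>e\<close> or below \<open>f\<close> and is \<open>\<rho>\<close>-related to both, so the hypothesis puts \<open>e\<close> in the class of
  \<open>0\<close>; multiplying back by \<open>a\<close> puts \<open>a\<close> there too. Hence every nontrivial class is the class
  of \<open>0\<close>, which is an ideal.\<close>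

lemma congruence_refl: "congruence \<rho> \<Longrightarrow> (x, x) \<in> \<rho>"
  and congruence_sym: "congruence \<rho> \<Longrightarrow> (x, y) \<in> \<rho> \<Longrightarrow> (y, x) \<in> \<rho>"
  and congruence_trans: "congruence \<rho> \<Longrightarrow> (x, y) \<in> \<rho> \<Longrightarrow> (y, w) \<in> \<rho> \<Longrightarrow> (x, w) \<in> \<rho>"
  and congruence_mult: "congruence \<rho> \<Longrightarrow> (x, y) \<in> \<rho> \<Longrightarrow> (u * x * v, u * y * v) \<in> \<rho>"
  unfolding congruence_def equiv_def by (auto dest: refl_onD symD elim: transE)

lemma is_ideal_zero_class:
  assumes "congruence \<rho>" and "is_zero z"
  shows "is_ideal {a. (a, z) \<in> \<rho>}"
  unfolding is_ideal_def
proof (intro allI impI, simp)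
  fix m x n assume "(x, z) \<in> \<rho>"
  from congruence_mult[OF assms(1) this, of m n] show "(m * x * n, z) \<in> \<rho>"
    using assms(2) unfolding is_zero_def by simp
qed

lemma congruence_eq_rees_cong_zero_class:
  assumes cong: "congruence \<rho>"
    and nontrivial: "\<And>a b. (a, b) \<in> \<rho> \<Longrightarrow> a \<noteq> b \<Longrightarrow> (a, z) \<in> \<rho>"
  shows "\<rho> = rees_cong {a. (a, z) \<in> \<rho>}"
proof (intro set_eqI iffI)
  fix p assume "p \<in> \<rho>"
  then obtain a b where p: "p = (a, b)" and ab: "(a, b) \<in> \<rho>" by (cases p) auto
  have "(b, z) \<in> \<rho>" if "a \<noteq> b"
    using nontrivial[OF congruence_sym[OF cong ab]] that by blast
  then show "p \<in> rees_cong {a. (a, z) \<in> \<rho>}"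
    using p nontrivial[OF ab] unfolding rees_cong_def by auto
next
  fix p assume "p \<in> rees_cong {a. (a, z) \<in> \<rho>}"
  then show "p \<in> \<rho>" unfolding rees_cong_def
    using congruence_refl[OF cong] congruence_trans[OF cong _ congruence_sym[OF cong]] by blast
qed

definition inv_elem :: "'a::monoid_mult \<Rightarrow> 'a" where
  "inv_elem a = (THE b. a * b * a = a \<and> b * a * b = b)"

context
  assumes inverse: "inverse_monoid TYPE('a::monoid_mult)"
begin

lemma inv_elem_unique:
  assumes "a * b * a = a" and "b * a * b = (b::'a)"
  shows "b = inv_elem a"
proof -
  have "\<exists>!b. a * b * a = a \<and> b * a * b = b" using inverse unfolding inverse_monoid_def by blast
  from the1_equality[OF this] assms show ?thesis unfolding inv_elem_def by simp
qed

lemma mult_inv_elem_mult: "a * inv_elem a * a = (a::'a)"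
  and inv_elem_mult_inv_elem: "inv_elem a * a * inv_elem a = inv_elem (a::'a)"
  using theI'[of "\<lambda>b. a * b * a = a \<and> b * a * b = b"] inverse
  unfolding inv_elem_def inverse_monoid_def by auto

lemma idempotent_inv_elem: "e \<in> idems \<Longrightarrow> inv_elem e = (e::'a)"
  using inv_elem_unique[of e e] unfolding idems_def by (simp add: mult.assoc)

lemma idems_mult:
  assumes e: "e \<in> idems" and f: "f \<in> idems"
  shows "e * f \<in> (idems :: 'a set)"
proof -
  from e f have ee: "e * e = e" and ff: "f * f = f" unfolding idems_def by auto
  define x where "x = inv_elem (e * f)"
  have x1: "e * f * x * (e * f) = e * f" and x2: "x * (e * f) * x = x"
    unfolding x_def by (rule mult_inv_elem_mult, rule inv_elem_mult_inv_elem)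
  txt \<open>\<open>f x e\<close> is also an inverse of \<open>e f\<close>, hence equal to \<open>x\<close>, which makes \<open>x\<close> idempotent.\<close>
  have "e * f * (f * x * e) * (e * f) = e * (f * f) * x * (e * e) * f" by (simp add: mult.assoc)
  with ee ff x1 have "e * f * (f * x * e) * (e * f) = e * f" by (simp add: mult.assoc)
  moreover have "f * x * e * (e * f) * (f * x * e) = f * (x * (e * e) * (f * f) * x) * e"
    by (simp add: mult.assoc)
  with ee ff x2 have "f * x * e * (e * f) * (f * x * e) = f * x * e" by (simp add: mult.assoc)
  ultimately have fxe: "f * x * e = x"
    unfolding x_def by (rule inv_elem_unique)
  have "x * x = (f * x * e) * (f * x * e)" using fxe by simp
  also have "\<dots> = f * (x * (e * f) * x) * e" by (simp add: mult.assoc)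
  finally have "x * x = f * (x * (e * f) * x) * e" .
  with x2 fxe have x_idem: "x \<in> idems" unfolding idems_def by (simp add: mult.assoc)
  have "e * f = inv_elem x" using inv_elem_unique[of x "e * f"] x1 x2 by (simp add: mult.assoc)
  with x_idem show ?thesis by (simp add: idempotent_inv_elem)
qed

lemma idems_commute:
  assumes e: "e \<in> idems" and f: "f \<in> idems"
  shows "e * f = f * (e::'a)"
proof -
  from e f have ee: "e * e = e" and ff: "f * f = f" unfolding idems_def by auto
  have ef: "(e * f) * (e * f) = e * f" and fe: "(f * e) * (f * e) = f * e"
    using idems_mult[OF e f] idems_mult[OF f e] unfolding idems_def by auto
  have "e * f * (f * e) * (e * f) = e * (f * f) * (e * e) * f" by (simp add: mult.assoc)
  with ee ff have "e * f * (f * e) * (e * f) = (e * f) * (e * f)" by (simp add: mult.assoc)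
  moreover have "f * e * (e * f) * (f * e) = f * (e * e) * (f * f) * e" by (simp add: mult.assoc)
  with ee ff have "f * e * (e * f) * (f * e) = (f * e) * (f * e)" by (simp add: mult.assoc)
  ultimately have "f * e = inv_elem (e * f)" using ef fe by (intro inv_elem_unique) simp_all
  also have "\<dots> = e * f" using idempotent_inv_elem idems_mult[OF e f] by simp
  finally show ?thesis by simp
qed

lemma inv_elem_mult_idems: "inv_elem a * a \<in> (idems :: 'a set)"
  and mult_inv_elem_idems: "a * inv_elem a \<in> (idems :: 'a set)"
proof -
  have "inv_elem a * a * (inv_elem a * a) = (inv_elem a * a * inv_elem a) * a"
    and "a * inv_elem a * (a * inv_elem a) = (a * inv_elem a * a) * inv_elem a"
    by (simp_all add: mult.assoc)
  then show "inv_elem a * a \<in> idems" "a * inv_elem a \<in> idems"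
    unfolding idems_def by (simp_all add: inv_elem_mult_inv_elem mult_inv_elem_mult)
qed

lemma greenH_if_same_idems:
  assumes "a * inv_elem a = b * inv_elem b" and "inv_elem a * a = inv_elem b * (b::'a)"
  shows "greenH a b"
proof -
  have left: "range (\<lambda>m. m * a) \<subseteq> range (\<lambda>m. m * b)"
    if "inv_elem a * a = inv_elem b * b" for a b :: 'a
  proof clarify
    fix m
    have "m * a = m * (a * inv_elem a * a)" by (simp add: mult_inv_elem_mult)
    also have "\<dots> = m * a * (inv_elem a * a)" by (simp add: mult.assoc)
    also have "\<dots> = (m * a * inv_elem b) * b" using that by (simp add: mult.assoc)
    finally show "m * a \<in> range (\<lambda>m. m * b)" by blast
  qed
  have right: "range (\<lambda>m. a * m) \<subseteq> range (\<lambda>m. b * m)"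
    if "a * inv_elem a = b * inv_elem b" for a b :: 'a
  proof clarify
    fix m
    have "a * m = (a * inv_elem a * a) * m" by (simp add: mult_inv_elem_mult)
    also have "\<dots> = b * (inv_elem b * a * m)" using that by (simp add: mult.assoc)
    finally show "a * m \<in> range (\<lambda>m. b * m)" by blast
  qed
  show ?thesis
    unfolding greenH_def
    using left[OF assms(2)] left[OF assms(2)[symmetric]]
      right[OF assms(1)] right[OF assms(1)[symmetric]] by blast
qed

context
  fixes \<rho> :: "('a \<times> 'a) set"
  assumes cong: "congruence \<rho>"
begin

lemma congruence_mult_inv_elem_mult:
  assumes "(a, b) \<in> \<rho>"
  shows "(a, a * inv_elem b * a) \<in> \<rho>"
proof -
  have ba: "(b, a) \<in> \<rho>" using congruence_sym[OF cong assms] .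
  have "(b * inv_elem b * b, a * inv_elem b * b) \<in> \<rho>"
    using congruence_mult[OF cong ba, of 1 "inv_elem b * b"] by (simp add: mult.assoc)
  moreover have "(a * inv_elem b * b, a * inv_elem b * a) \<in> \<rho>"
    using congruence_mult[OF cong ba, of "a * inv_elem b" 1] by (simp add: mult.assoc)
  ultimately have "(b, a * inv_elem b * a) \<in> \<rho>"
    using congruence_trans[OF cong] by (simp add: mult_inv_elem_mult)
  then show ?thesis using congruence_trans[OF cong assms] by blast
qed

lemma congruence_inv_elem_left:
  assumes "(a, b) \<in> \<rho>"
  shows "(inv_elem a, inv_elem b * b * inv_elem a) \<in> \<rho>"
proof -
  have "(inv_elem a, inv_elem a * (a * inv_elem b * a) * inv_elem a) \<in> \<rho>"
    using congruence_mult[OF cong congruence_mult_inv_elem_mult[OF assms],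
        of "inv_elem a" "inv_elem a"] by (simp add: inv_elem_mult_inv_elem)
  moreover have "(inv_elem a * (a * inv_elem b * a) * inv_elem a,
      (inv_elem a * a) * (inv_elem b * b) * inv_elem a) \<in> \<rho>"
    using congruence_mult[OF cong assms, of "inv_elem a * a * inv_elem b" "inv_elem a"]
    by (simp add: mult.assoc)
  moreover have "(inv_elem a * a) * (inv_elem b * b) * inv_elem a
      = inv_elem b * b * (inv_elem a * a * inv_elem a)"
    unfolding idems_commute[OF inv_elem_mult_idems inv_elem_mult_idems, of a b]
    by (simp add: mult.assoc)
  ultimately show ?thesis using congruence_trans[OF cong] by (simp add: inv_elem_mult_inv_elem)
qed

lemma congruence_inv_elem_right:
  assumes "(a, b) \<in> \<rho>"
  shows "(inv_elem a, inv_elem a * b * inv_elem b) \<in> \<rho>"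
proof -
  have "(inv_elem a, inv_elem a * (a * inv_elem b * a) * inv_elem a) \<in> \<rho>"
    using congruence_mult[OF cong congruence_mult_inv_elem_mult[OF assms],
        of "inv_elem a" "inv_elem a"] by (simp add: inv_elem_mult_inv_elem)
  moreover have "(inv_elem a * (a * inv_elem b * a) * inv_elem a,
      inv_elem a * (b * inv_elem b) * (a * inv_elem a)) \<in> \<rho>"
    using congruence_mult[OF cong assms, of "inv_elem a" "inv_elem b * (a * inv_elem a)"]
    by (simp add: mult.assoc)
  moreover have "inv_elem a * (b * inv_elem b) * (a * inv_elem a)
      = inv_elem a * ((a * inv_elem a) * (b * inv_elem b))"
    unfolding mult.assoc[of "inv_elem a" "b * inv_elem b"]
      idems_commute[OF mult_inv_elem_idems mult_inv_elem_idems, of b a] ..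
  ultimately show ?thesis
    using congruence_trans[OF cong] by (simp add: mult.assoc[symmetric] inv_elem_mult_inv_elem)
qed

lemma congruence_inv_elem:
  assumes ab: "(a, b) \<in> \<rho>"
  shows "(inv_elem a, inv_elem b) \<in> \<rho>"
proof -
  have ba: "(b, a) \<in> \<rho>" using congruence_sym[OF cong ab] .
  have "(inv_elem a, inv_elem b * b * inv_elem a) \<in> \<rho>" by (rule congruence_inv_elem_left[OF ab])
  moreover have "(inv_elem b * b * inv_elem a, inv_elem b * a * inv_elem a) \<in> \<rho>"
    by (rule congruence_mult[OF cong ba])
  moreover have "(inv_elem b * a * inv_elem a, inv_elem b) \<in> \<rho>"
    by (rule congruence_sym[OF cong congruence_inv_elem_right[OF ba]])
  ultimately show ?thesis using congruence_trans[OF cong] by blast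
qed

lemma distinct_congruent_idems_zero:
  assumes below_zero: "\<forall>e\<in>idems. (\<exists>f\<in>idems. nat_less f e \<and> (e, f) \<in> \<rho>) \<longrightarrow> (e, z) \<in> \<rho>"
    and e: "e \<in> idems" and f: "f \<in> idems" and ef: "(e, f) \<in> \<rho>" and "e \<noteq> f"
  shows "(e, z) \<in> \<rho>"
proof -
  from e f have ee: "e * e = e" and ff: "f * f = f" unfolding idems_def by auto
  have comm: "e * f = f * e" by (rule idems_commute[OF e f])
  have "(e, e * f) \<in> \<rho>" using congruence_mult[OF cong ef, of e 1] ee by simp
  moreover have "(f, e * f) \<in> \<rho>"
    using congruence_mult[OF cong congruence_sym[OF cong ef], of f 1] ff comm by simp
  moreover have "nat_le (e * f) e" and "nat_le (e * f) f"
    unfolding nat_le_def using ee ff comm by (metis mult.assoc)+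
  moreover have "e * f \<noteq> e \<or> e * f \<noteq> f" using \<open>e \<noteq> f\<close> by auto
  ultimately have "(e, z) \<in> \<rho> \<or> (f, z) \<in> \<rho>"
    using below_zero e f idems_mult[OF e f] unfolding nat_less_def by blast
  then show ?thesis using congruence_trans[OF cong ef] by blast
qed

lemma distinct_congruent_zero:
  assumes H_trivial: "\<forall>a b::'a. greenH a b \<longrightarrow> a = b" and zero: "is_zero z"
    and below_zero: "\<forall>e\<in>idems. (\<exists>f\<in>idems. nat_less f e \<and> (e, f) \<in> \<rho>) \<longrightarrow> (e, z) \<in> \<rho>"
    and ab: "(a, b) \<in> \<rho>" and "a \<noteq> b"
  shows "(a, z) \<in> \<rho>"
proof -
  have inv_ab: "(inv_elem a, inv_elem b) \<in> \<rho>" by (rule congruence_inv_elem[OF ab])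
  have "(a * inv_elem a, b * inv_elem a) \<in> \<rho>"
    using congruence_mult[OF cong ab, of 1] by simp
  moreover have "(b * inv_elem a, b * inv_elem b) \<in> \<rho>"
    using congruence_mult[OF cong inv_ab, of b 1] by simp
  ultimately have right: "(a * inv_elem a, b * inv_elem b) \<in> \<rho>" by (rule congruence_trans[OF cong])
  have "(inv_elem a * a, inv_elem b * a) \<in> \<rho>"
    using congruence_mult[OF cong inv_ab, of 1 a] by simp
  moreover have "(inv_elem b * a, inv_elem b * b) \<in> \<rho>"
    using congruence_mult[OF cong ab, of _ 1] by simp
  ultimately have left: "(inv_elem a * a, inv_elem b * b) \<in> \<rho>" by (rule congruence_trans[OF cong])
  have "\<not> greenH a b" using H_trivial \<open>a \<noteq> b\<close> by blast
  then consider "a * inv_elem a \<noteq> b * inv_elem b" | "inv_elem a * a \<noteq> inv_elem b * b"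
    using greenH_if_same_idems by blast
  then show ?thesis
  proof cases
    case 1
    then have "(a * inv_elem a, z) \<in> \<rho>"
      using distinct_congruent_idems_zero[OF below_zero mult_inv_elem_idems mult_inv_elem_idems right]
      by blast
    from congruence_mult[OF cong this, of 1 a] show ?thesis
      using zero unfolding is_zero_def by (simp add: mult_inv_elem_mult)
  next
    case 2
    then have "(inv_elem a * a, z) \<in> \<rho>"
      using distinct_congruent_idems_zero[OF below_zero inv_elem_mult_idems inv_elem_mult_idems left]
      by blast
    from congruence_mult[OF cong this, of a 1] show ?thesis
      using zero unfolding is_zero_def by (simp add: mult_inv_elem_mult mult.assoc[symmetric])
  qed
qed

end

end

theorem lemma3p1:
  fixes \<rho> :: "('a::{monoid_mult, finite} \<times> 'a) set" and z :: 'a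
  assumes "inverse_monoid TYPE('a)"
    and "\<forall>a b::'a. greenH a b \<longrightarrow> a = b"
    and "is_zero z"
    and "congruence \<rho>"
    and "\<forall>e\<in>idems. (\<exists>f\<in>idems. nat_less f e \<and> (e, f) \<in> \<rho>) \<longrightarrow> (e, z) \<in> \<rho>"
  shows "\<exists>I. is_ideal I \<and> \<rho> = rees_cong I"
proof -
  have "(a, z) \<in> \<rho>" if "(a, b) \<in> \<rho>" and "a \<noteq> b" for a b
    using distinct_congruent_zero[OF assms(1,4,2,3,5) that] .
  then show ?thesis
    using is_ideal_zero_class[OF assms(4,3)] congruence_eq_rees_cong_zero_class[OF assms(4)]
    by blast
qed

end
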